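(* With the notation of the context, $$\|\mathrm T^{{\rm b},m}\|^2_{kk_1\to k_2k_3}\lesssim(N_2\wedge N_3)^{2-\alpha}N_1^{2-\alpha},\qquad \|\mathrm T^{{\rm b},m}\|^2_{kk_3\to k_1k_2}\lesssim(N_1\wedge N_2)^{2-\alpha}N_3^{2-\alpha},$$ $$\|\mathrm T^{{\rm b},m}\|^2_{kk_2\to k_1k_3}\lesssim(N_1\wedge N_3)^{1-\frac\alpha2}(N\wedge N_2)^{1-\frac\alpha2}.$$
   Context: Fix $\alpha\in(1,2)$, dyadic numbers $1\le N_1,N_2,N_3\le N$, a real number $m$ and a constant $C_0>0$. Let $S$ be the set of $(k,k_1,k_2,k_3)\in\mathbb Z^4$ with $k=k_1-k_2+k_3$, $k_2\notin\{k_1,k_3\}$, $\big||k_1|^\alpha-|k_2|^\alpha+|k_3|^\alpha-|k|^\alpha-m\big|\le C_0$, $|k|\le N$ and $|k_j|\le N_j$ for $j=1,2,3$. The base tensor is $\mathrm T^{{\rm b},m}_{kk_1k_2k_3}=\mathbf 1_S(k,k_1,k_2,k_3)$. For a tensor $H=H_{k_A}$ indexed by $k_A=(k_j)_{j\in A}\in\mathbb Z^A$ and a partition $(B,C)$ of $A$, $\|H\|_{k_B\to k_C}^2=\sup\{\sum_{k_C}|\sum_{k_B}H_{k_A}z_{k_B}|^2:\sum_{k_B}|z_{k_B}|^2=1\}$ (the $\ell^2_{k_B}\to\ell^2_{k_C}$ operator norm; for $C=\emptyset$ it is the $\ell^2_{k_A}$ norm). $a\wedge b=\min(a,b)$. $A\lesssim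 B$ means $A\le CB$ with $C$ depending only on $\alpha$ and $C_0$. *)

theory Defs
  imports "HOL-Analysis.Analysis"
begin

definition dyadic :: "real \<Rightarrow> bool" where
  "dyadic x \<longleftrightarrow> (\<exists>n::nat. x = 2 ^ n)"

definition inS :: "real \<Rightarrow> real \<Rightarrow> real \<Rightarrow> real \<Rightarrow> real \<Rightarrow> real \<Rightarrow> real
    \<Rightarrow> int \<Rightarrow> int \<Rightarrow> int \<Rightarrow> int \<Rightarrow> bool" where
  "inS \<alpha> C0 m N N1 N2 N3 k k1 k2 k3 \<longleftrightarrow>
     k = k1 - k2 + k3 \<and> k2 \<noteq> k1 \<and> k2 \<noteq> k3 \<and>
     \<bar>\<bar>real_of_int k1\<bar> powr \<alpha> - \<bar>real_of_int k2\<bar> powr \<alpha> + \<bar>real_of_int k3\<bar> powr \<alpha>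
       - \<bar>real_of_int k\<bar> powr \<alpha> - m\<bar> \<le> C0 \<and>
     \<bar>real_of_int k\<bar> \<le> N \<and> \<bar>real_of_int k1\<bar> \<le> N1 \<and>
     \<bar>real_of_int k2\<bar> \<le> N2 \<and> \<bar>real_of_int k3\<bar> \<le> N3"

definition Tb :: "real \<Rightarrow> real \<Rightarrow> real \<Rightarrow> real \<Rightarrow> real \<Rightarrow> real \<Rightarrow> real
    \<Rightarrow> int \<Rightarrow> int \<Rightarrow> int \<Rightarrow> int \<Rightarrow> real" where
  "Tb \<alpha> C0 m N N1 N2 N3 k k1 k2 k3 = (if inS \<alpha> C0 m N N1 N2 N3 k k1 k2 k3 then 1 else 0)"

text \<open>Squared l^2_{k_B} -> l^2_{k_C} operator norm of a tensor H b c
  (b = the k_B indices, c = the k_C indices).\<close>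
definition opnorm2 :: "('b \<Rightarrow> 'c \<Rightarrow> real) \<Rightarrow> real" where
  "opnorm2 H = Sup {(\<Sum>\<^sub>\<infinity> c. (\<Sum>\<^sub>\<infinity> b. H b c * z b)\<^sup>2) | z.
       (\<lambda>b. (z b)\<^sup>2) summable_on UNIV \<and> (\<Sum>\<^sub>\<infinity> b. (z b)\<^sup>2) = 1}"

end

theory Submission
  imports Defs
begin

text \<open>
  Each bound is Schur's test for a 0/1 tensor: the squared operator norm is at most the largest
  row count times the largest column count. Fixing two of the four frequencies leaves one free
  integer \<open>x\<close>, and the resonance condition confines either \<open>|x + d|\<^sup>\<alpha> - |x|\<^sup>\<alpha>\<close> (with
  \<open>d \<noteq> 0\<close>) or \<open>|x|\<^sup>\<alpha> + |s - x|\<^sup>\<alpha>\<close> to an interval of length \<open>2 C0\<close>. On \<open>[-R, R]\<close> the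
  derivative of \<open>|t|\<^sup>\<alpha>\<close> increases at rate at least \<open>\<alpha> (\<alpha> - 1) R powr (\<alpha> - 2)\<close>. Hence the
  first function is monotone with slope of that order and hits the interval at
  \<open>O(R powr (2 - \<alpha>))\<close> integers, while the second is strongly convex with that modulus and hits
  it at \<open>O(R powr (1 - \<alpha>/2))\<close> integers; \<open>R\<close> is the smaller size bound of the two free
  frequencies.
\<close>

subsection \<open>The derivative of \<open>|t| powr a\<close>\<close>

definition abs_powr_deriv :: "real \<Rightarrow> real \<Rightarrow> real" where
  "abs_powr_deriv a t = a * sgn t * \<bar>t\<bar> powr (a - 1)"

lemma has_real_derivative_abs_powr:
  assumes a: "1 < a"
  shows "((\<lambda>t. \<bar>t\<bar> powr a) has_real_derivative abs_powr_deriv a t) (at t)"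
proof -
  consider "t > 0" | "t < 0" | "t = 0" by linarith
  then show ?thesis
  proof cases
    case 1
    have "((\<lambda>x. x powr a) has_real_derivative abs_powr_deriv a t) (at t)"
      using has_real_derivative_powr[OF 1, of a] 1 by (simp add: abs_powr_deriv_def)
    then show ?thesis
      by (rule has_field_derivative_transform_within_open[where S="{0<..}"]) (use 1 in auto)
  next
    case 2
    have "((\<lambda>x. (- x) powr a) has_real_derivative a * (-t) powr (a - of_nat 1) * (-1)) (at t)"
      by (rule DERIV_fun_powr) (use 2 in \<open>auto intro!: derivative_eq_intros\<close>)
    then have "((\<lambda>x. (- x) powr a) has_real_derivative abs_powr_deriv a t) (at t)"
      using 2 by (simp add: abs_powr_deriv_def)
    then show ?thesis
      by (rule has_field_derivative_transform_within_open[where S="{..<0}"]) (use 2 in auto)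
  next
    case 3
    have lim: "((\<lambda>y. \<bar>y\<bar> powr (a - 1)) \<longlongrightarrow> 0) (at 0)"
      by (rule tendsto_zero_powrI) (use a in \<open>auto intro!: tendsto_eq_intros\<close>)
    have "eventually (\<lambda>y. norm ((\<bar>y\<bar> powr a - \<bar>0\<bar> powr a) / (y - 0)) \<le> \<bar>y\<bar> powr (a - 1)) (at 0)"
      unfolding eventually_at_filter
      by (auto simp: powr_diff abs_divide intro!: always_eventually)
    then have "((\<lambda>y. (\<bar>y\<bar> powr a - \<bar>0\<bar> powr a) / (y - 0)) \<longlongrightarrow> 0) (at 0)"
      using lim by (rule Lim_null_comparison)
    then show ?thesis using 3 by (simp add: has_field_derivative_iff abs_powr_deriv_def)
  qed
qed

lemma has_real_derivative_abs_powr_comp: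
  assumes "1 < a" and "(f has_real_derivative f') (at x)"
  shows "((\<lambda>x. \<bar>f x\<bar> powr a) has_real_derivative abs_powr_deriv a (f x) * f') (at x)"
  using DERIV_chain2[OF has_real_derivative_abs_powr[OF assms(1)] assms(2)] .

lemma powr_increment_ge:
  fixes b R t u :: real
  assumes b: "0 < b" "b < 1" and tu: "0 \<le> t" "t \<le> u" "u \<le> R"
  shows "b * R powr (b - 1) * (u - t) \<le> u powr b - t powr b"
proof (cases "t = 0")
  case True
  show ?thesis
  proof (cases "u = 0")
    case False
    then have u: "u > 0" using tu by simp
    have "b * R powr (b - 1) * u \<le> R powr (b - 1) * u"
      unfolding mult.assoc by (rule mult_left_le_one_le) (use b u in auto)
    also have "\<dots> \<le> u powr (b - 1) * u"
      by (intro mult_right_mono powr_mono2') (use b tu u in auto)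
    also have "\<dots> = u powr b"
      using u by (simp add: powr_diff)
    finally show ?thesis using True by simp
  qed (use True in simp)
next
  case False
  then have t: "t > 0" using tu by simp
  let ?g = "\<lambda>x. x powr b - b * R powr (b - 1) * x"
  have "?g t \<le> ?g u"
  proof (rule deriv_nonneg_imp_mono[where g = ?g and a = t and b = u and g' = "\<lambda>x. b * x powr (b - 1) - b * R powr (b - 1)"])
    fix x assume x: "x \<in> {t..u}"
    then have "x > 0" using t by auto
    then show "(?g has_real_derivative b * x powr (b - 1) - b * R powr (b - 1)) (at x)"
      by (auto intro!: derivative_eq_intros)
    have "R powr (b - 1) \<le> x powr (b - 1)"
      by (rule powr_mono2') (use b x \<open>x > 0\<close> tu in auto)
    then show "0 \<le> b * x powr (b - 1) - b * R powr (b - 1)"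
      using b by simp
  qed (use tu in auto)
  then show ?thesis by (simp add: algebra_simps)
qed

lemma abs_powr_deriv_increment_ge:
  fixes a R t u :: real
  assumes a: "1 < a" "a < 2" and tu: "- R \<le> t" "t \<le> u" "u \<le> R"
  shows "a * (a - 1) * R powr (a - 2) * (u - t) \<le> abs_powr_deriv a u - abs_powr_deriv a t"
proof -
  define c where "c = (a - 1) * R powr (a - 2)"
  have nonneg: "abs_powr_deriv a x = a * x powr (a - 1)" if "x \<ge> 0" for x
    using that by (auto simp: abs_powr_deriv_def sgn_if)
  have neg: "abs_powr_deriv a x = - a * (-x) powr (a - 1)" if "x < 0" for x
    using that by (auto simp: abs_powr_deriv_def sgn_if)
  have concave: "c * (q - p) \<le> q powr (a - 1) - p powr (a - 1)" if "0 \<le> p" "p \<le> q" "q \<le> R" for p q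
    using powr_increment_ge[of "a - 1" p q R] that a by (simp add: c_def)
  have "c * (u - t) \<le> (abs_powr_deriv a u - abs_powr_deriv a t) / a"
  proof -
    consider "0 \<le> t" | "u < 0" | "t < 0" "0 \<le> u" by linarith
    then show ?thesis
    proof cases
      case 1
      have "(abs_powr_deriv a u - abs_powr_deriv a t) / a = u powr (a - 1) - t powr (a - 1)"
        using 1 tu a by (simp add: nonneg field_simps)
      then show ?thesis using concave[of t u] tu 1 by simp
    next
      case 2
      have "(abs_powr_deriv a u - abs_powr_deriv a t) / a = (-t) powr (a - 1) - (-u) powr (a - 1)"
        using 2 tu a by (simp add: neg field_simps)
      then show ?thesis using concave[of "-u" "-t"] tu 2 by simp
    next
      case 3
      have "(abs_powr_deriv a u - abs_powr_deriv a t) / a = u powr (a - 1) + (-t) powr (a - 1)"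
        using 3 tu a by (simp add: nonneg neg field_simps)
      then show ?thesis using concave[of 0 u] concave[of 0 "-t"] tu 3 by (simp add: algebra_simps)
    qed
  qed
  then show ?thesis using a by (simp add: c_def field_simps)
qed

lemma abs_powr_deriv_mono:
  assumes "1 < a" "a < 2" "t \<le> u"
  shows "abs_powr_deriv a t \<le> abs_powr_deriv a u"
proof -
  have "0 \<le> a * (a - 1) * (\<bar>t\<bar> + \<bar>u\<bar>) powr (a - 2) * (u - t)"
    using assms by auto
  also have "\<dots> \<le> abs_powr_deriv a u - abs_powr_deriv a t"
    by (rule abs_powr_deriv_increment_ge) (use assms in auto)
  finally show ?thesis by simp
qed

text \<open>A step of length at least 1 is compared with the unit step inside the smaller of the two
  balls, where the derivative of \<open>\<bar>t\<bar> powr a\<close> grows fastest.\<close>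
lemma abs_powr_deriv_shift_ge:
  assumes a: "1 < a" "a < 2" and AB: "1 \<le> A" "1 \<le> B"
    and t: "\<bar>t\<bar> \<le> A" "\<bar>t + d\<bar> \<le> B" and d: "1 \<le> d"
  shows "a * (a - 1) * (2 * min A B) powr (a - 2) \<le> abs_powr_deriv a (t + d) - abs_powr_deriv a t"
proof (cases "A \<le> B")
  case True
  have "a * (a - 1) * (2 * A) powr (a - 2) * ((t + 1) - t)
      \<le> abs_powr_deriv a (t + 1) - abs_powr_deriv a t"
    by (rule abs_powr_deriv_increment_ge) (use a AB t d in auto)
  moreover have "abs_powr_deriv a (t + 1) \<le> abs_powr_deriv a (t + d)"
    by (rule abs_powr_deriv_mono) (use a d in auto)
  ultimately show ?thesis using True by simp
next
  case False
  have "a * (a - 1) * (2 * B) powr (a - 2) * ((t + d) - (t + d - 1))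
      \<le> abs_powr_deriv a (t + d) - abs_powr_deriv a (t + d - 1)"
    by (rule abs_powr_deriv_increment_ge) (use a AB t d in auto)
  moreover have "abs_powr_deriv a t \<le> abs_powr_deriv a (t + d - 1)"
    by (rule abs_powr_deriv_mono) (use a d in auto)
  ultimately show ?thesis using False by simp
qed

lemma abs_powr_deriv_gap:
  assumes a: "1 < a" "a < 2" and AB: "1 \<le> A" "1 \<le> B"
    and t: "\<bar>t\<bar> \<le> A" "\<bar>t + d\<bar> \<le> B" and d: "1 \<le> \<bar>d\<bar>"
  shows "a * (a - 1) / 2 * (min A B) powr (a - 2) \<le> \<bar>abs_powr_deriv a (t + d) - abs_powr_deriv a t\<bar>"
proof -
  have "(min A B) powr (a - 2) / 2 = 2 powr (-1) * (min A B) powr (a - 2)"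
    by (simp add: powr_minus_divide)
  also have "\<dots> \<le> 2 powr (a - 2) * (min A B) powr (a - 2)"
    using a by (intro mult_right_mono powr_mono) auto
  also have "\<dots> = (2 * min A B) powr (a - 2)"
    using AB by (simp add: powr_mult)
  finally have "(min A B) powr (a - 2) / 2 \<le> (2 * min A B) powr (a - 2)" .
  then have "a * (a - 1) * ((min A B) powr (a - 2) / 2) \<le> a * (a - 1) * (2 * min A B) powr (a - 2)"
    using a by (intro mult_left_mono) auto
  also have "\<dots> \<le> \<bar>abs_powr_deriv a (t + d) - abs_powr_deriv a t\<bar>"
  proof (cases "d \<ge> 1")
    case True
    then show ?thesis using abs_powr_deriv_shift_ge[OF a AB t] by simp
  next
    case False
    then have "a * (a - 1) * (2 * min B A) powr (a - 2)
        \<le> abs_powr_deriv a ((t + d) + - d) - abs_powr_deriv a (t + d)"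
      using d t by (intro abs_powr_deriv_shift_ge a AB) auto
    then show ?thesis by (simp add: min.commute)
  qed
  finally show ?thesis by simp
qed

subsection \<open>Integer points in a level band\<close>

lemma card_int_le_diameter:
  fixes S :: "int set"
  assumes "finite S" "0 \<le> D"
    and diam: "\<And>x y. x \<in> S \<Longrightarrow> y \<in> S \<Longrightarrow> x \<le> y \<Longrightarrow> real_of_int (y - x) \<le> D"
  shows "real (card S) \<le> D + 1"
proof (cases "S = {}")
  case False
  have "card S \<le> card {Min S..Max S}"
    using assms(1) by (intro card_mono) auto
  also have "card {Min S..Max S} = nat (Max S - Min S + 1)"
    by simp
  finally have "real (card S) \<le> real_of_int (Max S - Min S) + 1"
    using Min_le[OF assms(1) Max_in[OF assms(1) False]] by linarith
  also have "real_of_int (Max S - Min S) \<le> D"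
    using assms(1) False by (intro diam) auto
  finally show ?thesis by simp
qed (use assms in simp)

lemma card_int_le_sqrt_diameter:
  fixes S :: "int set"
  assumes "finite S" "0 \<le> D"
    and diam: "\<And>x y. x \<in> S \<Longrightarrow> y \<in> S \<Longrightarrow> x \<le> y \<Longrightarrow> (real_of_int y - real_of_int x)\<^sup>2 \<le> D"
  shows "real (card S) \<le> sqrt D + 1"
proof (rule card_int_le_diameter)
  fix x y assume "x \<in> S" "y \<in> S" "x \<le> y"
  then show "real_of_int (y - x) \<le> sqrt D"
    using diam[of x y] real_le_rsqrt by simp
qed (use assms in auto)

lemma card_int_band_of_expanding:
  fixes S :: "int set" and F :: "real \<Rightarrow> real"
  assumes "finite S" "0 < l" "0 \<le> \<delta>"
    and expanding: "\<And>x y. x \<in> S \<Longrightarrow> y \<in> S \<Longrightarrow> x \<le> y \<Longrightarrow>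
      l * (real_of_int y - real_of_int x) \<le> \<bar>F y - F x\<bar>"
    and band: "\<And>x. x \<in> S \<Longrightarrow> \<bar>F x - e\<bar> \<le> \<delta>"
  shows "real (card S) \<le> 2 * \<delta> / l + 1"
proof (rule card_int_le_diameter)
  fix x y assume xy: "x \<in> S" "y \<in> S" "x \<le> y"
  have "l * (real_of_int y - real_of_int x) \<le> 2 * \<delta>"
    using expanding[OF xy] band[OF xy(1)] band[OF xy(2)] by linarith
  then show "real_of_int (y - x) \<le> 2 * \<delta> / l"
    using \<open>0 < l\<close> by (simp add: field_simps)
qed (use assms in auto)

lemma strongly_convex_tangent_bound:
  fixes G G' :: "real \<Rightarrow> real"
  assumes deriv: "\<And>t. min x y \<le> t \<Longrightarrow> t \<le> max x y \<Longrightarrow> (G has_real_derivative G' t) (at t)"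
    and modulus: "\<And>t u. min x y \<le> t \<Longrightarrow> t \<le> u \<Longrightarrow> u \<le> max x y \<Longrightarrow> l * (u - t) \<le> G' u - G' t"
  shows "G x + G' x * (y - x) + l / 2 * (y - x)\<^sup>2 \<le> G y"
proof -
  define H where "H t = G t - G' x * t - l / 2 * (t - x)\<^sup>2" for t
  define H' where "H' t = G' t - G' x - l * (t - x)" for t
  have dH: "(H has_real_derivative H' t) (at t)" if "min x y \<le> t" "t \<le> max x y" for t
    unfolding H_def H'_def using deriv[OF that] by (auto intro!: derivative_eq_intros)
  have "H x \<le> H y"
  proof (cases "x \<le> y")
    case True
    show ?thesis
      by (rule deriv_nonneg_imp_mono[where g' = H'])
        (use True dH modulus[of x] in \<open>auto simp: H'_def\<close>)
  next
    case False
    show ?thesis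
      by (rule deriv_nonpos_imp_antimono[where g' = H'])
        (use False dH modulus[of _ x] in \<open>auto simp: H'_def algebra_simps\<close>)
  qed
  then show ?thesis by (simp add: H_def algebra_simps)
qed

lemma card_int_band_of_strongly_convex:
  fixes S :: "int set" and G G' :: "real \<Rightarrow> real"
  assumes "finite S" "0 < l" "0 \<le> \<delta>"
    and tangent: "\<And>x y. x \<in> S \<Longrightarrow> y \<in> S \<Longrightarrow>
      G x + G' x * (real_of_int y - x) + l / 2 * (real_of_int y - x)\<^sup>2 \<le> G y"
    and band: "\<And>x. x \<in> S \<Longrightarrow> \<bar>G x - e\<bar> \<le> \<delta>"
  shows "real (card S) \<le> 2 * (sqrt (4 * \<delta> / l) + 1)"
proof -
  have nonneg: "real (card {x \<in> S. 0 \<le> G' x}) \<le> sqrt (4 * \<delta> / l) + 1"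
  proof (rule card_int_le_sqrt_diameter)
    fix x y assume "x \<in> {x \<in> S. 0 \<le> G' x}" "y \<in> {x \<in> S. 0 \<le> G' x}" "x \<le> y"
    then have xy: "x \<in> S" "y \<in> S" and "0 \<le> G' x * (real_of_int y - x)"
      by simp_all
    then have "l / 2 * (real_of_int y - real_of_int x)\<^sup>2 \<le> 2 * \<delta>"
      using tangent[OF xy] abs_le_D2[OF band[OF xy(1)]] abs_le_D1[OF band[OF xy(2)]] by linarith
    then show "(real_of_int y - real_of_int x)\<^sup>2 \<le> 4 * \<delta> / l"
      using \<open>0 < l\<close> by (simp add: field_simps)
  qed (use assms in auto)
  have neg: "real (card {x \<in> S. G' x < 0}) \<le> sqrt (4 * \<delta> / l) + 1"
  proof (rule card_int_le_sqrt_diameter)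
    fix x y assume "x \<in> {x \<in> S. G' x < 0}" "y \<in> {x \<in> S. G' x < 0}" "x \<le> y"
    then have xy: "x \<in> S" "y \<in> S" and "0 \<le> G' y * (real_of_int x - y)"
      by (simp_all add: mult_nonpos_nonpos)
    moreover have "l / 2 * (real_of_int x - y)\<^sup>2 = l / 2 * (real_of_int y - x)\<^sup>2"
      by (simp add: power2_commute)
    ultimately have "l / 2 * (real_of_int y - real_of_int x)\<^sup>2 \<le> 2 * \<delta>"
      using tangent[OF xy(2,1)] abs_le_D1[OF band[OF xy(1)]] abs_le_D2[OF band[OF xy(2)]] by linarith
    then show "(real_of_int y - real_of_int x)\<^sup>2 \<le> 4 * \<delta> / l"
      using \<open>0 < l\<close> by (simp add: field_simps)
  qed (use assms in auto)
  have "card S \<le> card {x \<in> S. 0 \<le> G' x} + card {x \<in> S. G' x < 0}"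
    by (rule order.trans[OF eq_imp_le card_Un_le]) (rule arg_cong[where f = card], auto)
  then have "real (card S) \<le> real (card {x \<in> S. 0 \<le> G' x} + card {x \<in> S. G' x < 0})"
    by (rule of_nat_mono)
  also have "\<dots> = real (card {x \<in> S. 0 \<le> G' x}) + real (card {x \<in> S. G' x < 0})"
    by (rule of_nat_add)
  also have "\<dots> \<le> (sqrt (4 * \<delta> / l) + 1) + (sqrt (4 * \<delta> / l) + 1)"
    by (rule add_mono[OF nonneg neg])
  finally show ?thesis
    by (simp only: mult_2)
qed

lemma finite_int_abs_le: "finite {x::int. \<bar>real_of_int x\<bar> \<le> A}"
proof (rule finite_subset)
  show "{x::int. \<bar>real_of_int x\<bar> \<le> A} \<subseteq> {-\<lceil>A\<rceil>..\<lceil>A\<rceil>}"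
    by (auto simp: abs_le_iff) linarith+
qed simp

lemma card_difference_level_set_le:
  fixes g h :: "'q \<Rightarrow> int" and d :: int
  assumes a: "1 < a" "a < 2" and AB: "1 \<le> A" "1 \<le> B" and "d \<noteq> 0" "0 \<le> \<delta>" and "inj_on g S"
    and S: "\<And>p. p \<in> S \<Longrightarrow> h p = g p + d \<and> \<bar>real_of_int (g p)\<bar> \<le> A \<and> \<bar>real_of_int (h p)\<bar> \<le> B \<and>
      \<bar>\<bar>real_of_int (h p)\<bar> powr a - \<bar>real_of_int (g p)\<bar> powr a - e\<bar> \<le> \<delta>"
  shows "real (card S) \<le> (4 * \<delta> / (a * (a - 1)) + 1) * (min A B) powr (2 - a)"
proof -
  define L where "L = {x. \<bar>real_of_int x\<bar> \<le> A \<and> \<bar>real_of_int (x + d)\<bar> \<le> B \<and>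
      \<bar>\<bar>real_of_int (x + d)\<bar> powr a - \<bar>real_of_int x\<bar> powr a - e\<bar> \<le> \<delta>}"
  define F where "F = (\<lambda>t::real. \<bar>t + d\<bar> powr a - \<bar>t\<bar> powr a)"
  define l where "l = a * (a - 1) / 2 * (min A B) powr (a - 2)"
  have "finite L"
    unfolding L_def by (rule finite_subset[OF _ finite_int_abs_le]) auto
  have "0 < l"
    using a AB by (simp add: l_def)
  have "real (card L) \<le> 2 * \<delta> / l + 1"
  proof (rule card_int_band_of_expanding[OF \<open>finite L\<close> \<open>0 < l\<close> \<open>0 \<le> \<delta>\<close>, where F = F and e = e])
    fix x y assume xy: "x \<in> L" "y \<in> L" "x \<le> y"
    show "l * (real_of_int y - real_of_int x) \<le> \<bar>F y - F x\<bar>"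
    proof (cases "x = y")
      case False
      with xy have "real_of_int x < y" by simp
      moreover have "(F has_real_derivative abs_powr_deriv a (t + d) - abs_powr_deriv a t) (at t)"
        for t :: real
      proof -
        have "((\<lambda>t. t + d) has_real_derivative 1) (at t)"
          by (auto intro!: derivative_eq_intros)
        from DERIV_diff[OF has_real_derivative_abs_powr_comp[OF a(1) this]
            has_real_derivative_abs_powr[OF a(1)]]
        show ?thesis by (simp add: F_def)
      qed
      ultimately obtain z :: real where z: "x < z" "z < y"
        and mvt: "F y - F x = (real_of_int y - x) * (abs_powr_deriv a (z + d) - abs_powr_deriv a z)"
        using MVT2[of x y F "\<lambda>t. abs_powr_deriv a (t + d) - abs_powr_deriv a t"] by blast
      have "l \<le> \<bar>abs_powr_deriv a (z + d) - abs_powr_deriv a z\<bar>"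
        unfolding l_def
        by (rule abs_powr_deriv_gap[OF a AB]) (use xy z \<open>d \<noteq> 0\<close> in \<open>auto simp: L_def abs_le_iff\<close>)
      then show ?thesis
        using z by (simp add: mvt abs_mult)
    qed simp
  qed (simp add: L_def F_def)
  also have "2 * \<delta> / l + 1 = 4 * \<delta> / (a * (a - 1)) * (min A B) powr (2 - a) + 1"
    using AB by (simp add: l_def powr_minus_divide[of _ "a - 2", simplified])
  also have "\<dots> \<le> (4 * \<delta> / (a * (a - 1)) + 1) * (min A B) powr (2 - a)"
    using a AB by (simp add: distrib_right ge_one_powr_ge_zero)
  finally have "real (card L) \<le> (4 * \<delta> / (a * (a - 1)) + 1) * (min A B) powr (2 - a)" .
  moreover have "g ` S \<subseteq> L"
  proof
    fix x assume "x \<in> g ` S"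
    then obtain p where "p \<in> S" "x = g p" by blast
    then show "x \<in> L" using S[OF \<open>p \<in> S\<close>] by (elim conjE) (simp add: L_def)
  qed
  then have "card S \<le> card L"
    using card_mono[OF \<open>finite L\<close>] card_image[OF \<open>inj_on g S\<close>] by metis
  ultimately show ?thesis by linarith
qed

lemma card_sum_level_set_le:
  fixes g h :: "'q \<Rightarrow> int" and s :: int
  assumes a: "1 < a" "a < 2" and AB: "1 \<le> A" "1 \<le> B" and "0 \<le> \<delta>" and "inj_on g S"
    and S: "\<And>p. p \<in> S \<Longrightarrow> h p = s - g p \<and> \<bar>real_of_int (g p)\<bar> \<le> A \<and> \<bar>real_of_int (h p)\<bar> \<le> B \<and>
      \<bar>\<bar>real_of_int (g p)\<bar> powr a + \<bar>real_of_int (h p)\<bar> powr a - e\<bar> \<le> \<delta>"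
  shows "real (card S) \<le> (2 * sqrt (4 * \<delta> / (a * (a - 1))) + 2) * (min A B) powr (1 - a / 2)"
proof -
  define L where "L = {x. \<bar>real_of_int x\<bar> \<le> A \<and> \<bar>real_of_int (s - x)\<bar> \<le> B \<and>
      \<bar>\<bar>real_of_int x\<bar> powr a + \<bar>real_of_int (s - x)\<bar> powr a - e\<bar> \<le> \<delta>}"
  define G where "G = (\<lambda>t::real. \<bar>t\<bar> powr a + \<bar>s - t\<bar> powr a)"
  define G' where "G' = (\<lambda>t::real. abs_powr_deriv a t - abs_powr_deriv a (s - t))"
  define l where "l = a * (a - 1) * (min A B) powr (a - 2)"
  have "finite L"
    unfolding L_def by (rule finite_subset[OF _ finite_int_abs_le]) auto
  have "0 < l"
    using a AB by (simp add: l_def)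
  have "real (card L) \<le> 2 * (sqrt (4 * \<delta> / l) + 1)"
  proof (rule card_int_band_of_strongly_convex[OF \<open>finite L\<close> \<open>0 < l\<close> \<open>0 \<le> \<delta>\<close>, where G = G and G' = G' and e = e])
    fix x y assume xy: "x \<in> L" "y \<in> L"
    show "G x + G' x * (real_of_int y - x) + l / 2 * (real_of_int y - x)\<^sup>2 \<le> G y"
    proof (rule strongly_convex_tangent_bound)
      fix t :: real
      have "((\<lambda>t. s - t) has_real_derivative -1) (at t)"
        by (auto intro!: derivative_eq_intros)
      from DERIV_add[OF has_real_derivative_abs_powr[OF a(1)]
          has_real_derivative_abs_powr_comp[OF a(1) this]]
      show "(G has_real_derivative G' t) (at t)"
        by (simp add: G_def G'_def)
    next
      fix t u :: real
      assume tu: "min (real_of_int x) y \<le> t" "t \<le> u" "u \<le> max (real_of_int x) y"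
      then have A: "\<bar>t\<bar> \<le> A" "\<bar>u\<bar> \<le> A" and B: "\<bar>s - t\<bar> \<le> B" "\<bar>s - u\<bar> \<le> B"
        using xy by (auto simp: L_def abs_le_iff min_def max_def split: if_splits)
      show "l * (u - t) \<le> G' u - G' t"
      proof (cases "A \<le> B")
        case True
        have "a * (a - 1) * A powr (a - 2) * (u - t) \<le> abs_powr_deriv a u - abs_powr_deriv a t"
          by (rule abs_powr_deriv_increment_ge) (use a tu A in auto)
        moreover have "abs_powr_deriv a (s - u) \<le> abs_powr_deriv a (s - t)"
          by (rule abs_powr_deriv_mono) (use a tu in auto)
        ultimately show ?thesis
          using True by (simp add: l_def G'_def)
      next
        case False
        have "a * (a - 1) * B powr (a - 2) * ((s - t) - (s - u))
            \<le> abs_powr_deriv a (s - t) - abs_powr_deriv a (s - u)"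
          by (rule abs_powr_deriv_increment_ge) (use a tu B in auto)
        moreover have "abs_powr_deriv a t \<le> abs_powr_deriv a u"
          by (rule abs_powr_deriv_mono) (use a tu in auto)
        ultimately show ?thesis
          using False by (simp add: l_def G'_def)
      qed
    qed
  qed (simp add: L_def G_def)
  also have "sqrt (4 * \<delta> / l) = sqrt (4 * \<delta> / (a * (a - 1))) * (min A B) powr (1 - a / 2)"
  proof -
    have "4 * \<delta> / l = 4 * \<delta> / (a * (a - 1)) * (min A B) powr (2 - a)"
      using AB by (simp add: l_def powr_minus_divide[of _ "a - 2", simplified])
    moreover have "sqrt ((min A B) powr (2 - a)) = (min A B) powr (1 - a / 2)"
      using AB by (simp add: powr_half_sqrt[symmetric] powr_powr field_simps)
    ultimately show ?thesis
      by (metis real_sqrt_mult)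
  qed
  also have "2 * (sqrt (4 * \<delta> / (a * (a - 1))) * (min A B) powr (1 - a / 2) + 1)
      \<le> (2 * sqrt (4 * \<delta> / (a * (a - 1))) + 2) * (min A B) powr (1 - a / 2)"
    using a AB by (simp add: distrib_right ge_one_powr_ge_zero)
  finally have "real (card L) \<le> (2 * sqrt (4 * \<delta> / (a * (a - 1))) + 2) * (min A B) powr (1 - a / 2)" .
  moreover have "g ` S \<subseteq> L"
  proof
    fix x assume "x \<in> g ` S"
    then obtain p where "p \<in> S" "x = g p" by blast
    then show "x \<in> L" using S[OF \<open>p \<in> S\<close>] by (elim conjE) (simp add: L_def)
  qed
  then have "card S \<le> card L"
    using card_mono[OF \<open>finite L\<close>] card_image[OF \<open>inj_on g S\<close>] by metis
  ultimately show ?thesis by linarith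
qed

subsection \<open>Schur's test\<close>

lemma schur_test_indicator_finite:
  fixes R :: "'b \<Rightarrow> 'c \<Rightarrow> bool" and z :: "'b \<Rightarrow> real" and \<rho> \<gamma> :: real
  assumes "finite Bs" "finite Cs" "0 \<le> \<rho>"
    and rows: "\<And>c. c \<in> Cs \<Longrightarrow> card {b \<in> Bs. R b c} \<le> \<rho>"
    and cols: "\<And>b. b \<in> Bs \<Longrightarrow> card {c \<in> Cs. R b c} \<le> \<gamma>"
  shows "(\<Sum>c\<in>Cs. (\<Sum>b\<in>{b \<in> Bs. R b c}. z b)\<^sup>2) \<le> \<rho> * \<gamma> * (\<Sum>b\<in>Bs. (z b)\<^sup>2)"
proof -
  have "(\<Sum>c\<in>Cs. (\<Sum>b\<in>{b \<in> Bs. R b c}. z b)\<^sup>2)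
      \<le> (\<Sum>c\<in>Cs. card {b \<in> Bs. R b c} * (\<Sum>b\<in>{b \<in> Bs. R b c}. (z b)\<^sup>2))"
    using Cauchy_Schwarz_ineq_sum[of "\<lambda>_. 1" z] by (intro sum_mono) simp
  also have "\<dots> \<le> (\<Sum>c\<in>Cs. \<rho> * (\<Sum>b\<in>{b \<in> Bs. R b c}. (z b)\<^sup>2))"
    by (intro sum_mono mult_right_mono) (auto intro: rows sum_nonneg)
  also have "\<dots> = \<rho> * (\<Sum>b\<in>Bs. (z b)\<^sup>2 * card {c \<in> Cs. R b c})"
    using assms(1,2) by (simp add: sum_distrib_left sum.swap_restrict[of Cs Bs] mult_ac)
  also have "\<dots> \<le> \<rho> * (\<Sum>b\<in>Bs. (z b)\<^sup>2 * \<gamma>)"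
    by (intro mult_left_mono sum_mono cols \<open>0 \<le> \<rho>\<close>) auto
  finally show ?thesis
    by (simp add: sum_distrib_left mult_ac)
qed

lemma opnorm2_indicator_le:
  fixes R :: "'b \<Rightarrow> 'c \<Rightarrow> bool" and \<rho> \<gamma> :: real
  assumes "finite Bs" "finite Cs" and supp: "\<And>b c. R b c \<Longrightarrow> b \<in> Bs \<and> c \<in> Cs"
    and rows: "\<And>b c. R b c \<Longrightarrow> card {b'. R b' c} \<le> \<rho>"
    and cols: "\<And>b c. R b c \<Longrightarrow> card {c'. R b c'} \<le> \<gamma>"
    and "0 \<le> \<rho>" "0 \<le> \<gamma>"
  shows "opnorm2 (\<lambda>b c. if R b c then 1 else 0) \<le> \<rho> * \<gamma>"
  unfolding opnorm2_def
proof (rule cSup_least)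
  define z0 :: "'b \<Rightarrow> real" where "z0 b = (if b = undefined then 1 else 0)" for b
  have "(\<lambda>b. (z0 b)\<^sup>2) summable_on UNIV"
    by (subst summable_on_cong_neutral[where T = "{undefined}" and g = "\<lambda>b. (z0 b)\<^sup>2"])
      (auto simp: z0_def)
  moreover have "(\<Sum>\<^sub>\<infinity> b. (z0 b)\<^sup>2) = 1"
    by (subst infsum_cong_neutral[where T = "{undefined}" and g = "\<lambda>b. (z0 b)\<^sup>2"])
      (auto simp: z0_def)
  ultimately have "\<exists>z :: 'b \<Rightarrow> real. (\<lambda>b. (z b)\<^sup>2) summable_on UNIV \<and> (\<Sum>\<^sub>\<infinity> b. (z b)\<^sup>2) = 1"
    by blast
  then show "{(\<Sum>\<^sub>\<infinity> c. (\<Sum>\<^sub>\<infinity> b. (if R b c then 1 else 0 :: real) * z b)\<^sup>2) | z.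
      (\<lambda>b. (z b)\<^sup>2) summable_on UNIV \<and> (\<Sum>\<^sub>\<infinity> b. (z b)\<^sup>2) = 1} \<noteq> {}"
    by simp
next
  fix x assume "x \<in> {(\<Sum>\<^sub>\<infinity> c. (\<Sum>\<^sub>\<infinity> b. (if R b c then 1 else 0 :: real) * z b)\<^sup>2) | z.
      (\<lambda>b. (z b)\<^sup>2) summable_on UNIV \<and> (\<Sum>\<^sub>\<infinity> b. (z b)\<^sup>2) = 1}"
  then obtain z where x: "x = (\<Sum>\<^sub>\<infinity> c. (\<Sum>\<^sub>\<infinity> b. (if R b c then 1 else 0 :: real) * z b)\<^sup>2)"
    and summable: "(\<lambda>b. (z b)\<^sup>2) summable_on UNIV" and norm: "(\<Sum>\<^sub>\<infinity> b. (z b)\<^sup>2) = 1"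
    by blast
  have inner: "(\<Sum>\<^sub>\<infinity> b. (if R b c then 1 else 0 :: real) * z b) = (\<Sum>b\<in>{b \<in> Bs. R b c}. z b)" for c
    using \<open>finite Bs\<close> supp by (subst infsum_cong_neutral[where T = "{b \<in> Bs. R b c}"]) auto
  have empty_row: "{b \<in> Bs. R b c} = {}" if "c \<notin> Cs" for c
    using supp that by blast
  have "x = (\<Sum>c\<in>Cs. (\<Sum>b\<in>{b \<in> Bs. R b c}. z b)\<^sup>2)"
    unfolding x inner using \<open>finite Cs\<close>
    by (subst infsum_cong_neutral[where T = Cs]) (simp_all add: empty_row)
  also have "\<dots> \<le> \<rho> * \<gamma> * (\<Sum>b\<in>Bs. (z b)\<^sup>2)"
  proof (rule schur_test_indicator_finite)
    show "card {b \<in> Bs. R b c} \<le> \<rho>" for c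
    proof (cases "{b. R b c} = {}")
      case False
      then obtain b where "R b c" by blast
      moreover have "{b \<in> Bs. R b c} = {b. R b c}" using supp by auto
      ultimately show ?thesis using rows by simp
    qed (use \<open>0 \<le> \<rho>\<close> in simp)
    show "card {c \<in> Cs. R b c} \<le> \<gamma>" for b
    proof (cases "{c. R b c} = {}")
      case False
      then obtain c where "R b c" by blast
      moreover have "{c \<in> Cs. R b c} = {c. R b c}" using supp by auto
      ultimately show ?thesis using cols by simp
    qed (use \<open>0 \<le> \<gamma>\<close> in simp)
  qed (use assms in auto)
  also have "\<dots> \<le> \<rho> * \<gamma> * 1"
  proof -
    have "(\<Sum>b\<in>Bs. (z b)\<^sup>2) \<le> (\<Sum>\<^sub>\<infinity> b. (z b)\<^sup>2)"
      using infsum_mono_neutral[OF _ summable, of "\<lambda>b. (z b)\<^sup>2" Bs] \<open>finite Bs\<close> by simp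
    then show ?thesis
      using norm assms(6,7) by (intro mult_left_mono) auto
  qed
  finally show "x \<le> \<rho> * \<gamma>" by simp
qed

subsection \<open>The three norms of the base tensor\<close>

lemma opnorm2_Tb_k_k1_to_k2_k3:
  assumes a: "1 < a" "a < 2" and "0 < C0" and N: "1 \<le> N1" "N1 \<le> N" "1 \<le> N2" "1 \<le> N3"
  shows "opnorm2 (\<lambda>(k, k1) (k2, k3). Tb a C0 m N N1 N2 N3 k k1 k2 k3)
    \<le> (4 * C0 / (a * (a - 1)) + 1)\<^sup>2 * (min N2 N3) powr (2 - a) * N1 powr (2 - a)"
proof -
  define K where "K = 4 * C0 / (a * (a - 1)) + 1"
  define R where "R = (\<lambda>(k, k1) (k2, k3). inS a C0 m N N1 N2 N3 k k1 k2 k3)"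
  have "(\<lambda>(k, k1) (k2, k3). Tb a C0 m N N1 N2 N3 k k1 k2 k3) = (\<lambda>b c. if R b c then 1 else 0)"
    by (auto simp: fun_eq_iff R_def Tb_def)
  moreover have "opnorm2 (\<lambda>b c. if R b c then 1 else 0)
      \<le> (K * N1 powr (2 - a)) * (K * (min N2 N3) powr (2 - a))"
  proof (rule opnorm2_indicator_le[where Bs = "{k. \<bar>real_of_int k\<bar> \<le> N} \<times> {k. \<bar>real_of_int k\<bar> \<le> N1}"
        and Cs = "{k. \<bar>real_of_int k\<bar> \<le> N2} \<times> {k. \<bar>real_of_int k\<bar> \<le> N3}"])
    fix b c assume "R b c"
    then obtain k k1 k2 k3 where bc: "b = (k, k1)" "c = (k2, k3)"
      and S: "inS a C0 m N N1 N2 N3 k k1 k2 k3"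
      by (auto simp: R_def split: prod.splits)
    then show "b \<in> {k. \<bar>real_of_int k\<bar> \<le> N} \<times> {k. \<bar>real_of_int k\<bar> \<le> N1} \<and>
        c \<in> {k. \<bar>real_of_int k\<bar> \<le> N2} \<times> {k. \<bar>real_of_int k\<bar> \<le> N3}"
      unfolding inS_def by blast
    have "real (card {b'. R b' c}) \<le> K * (min N1 N) powr (2 - a)"
      unfolding K_def
    proof (rule card_difference_level_set_le[where g = snd and h = fst and d = "k3 - k2"
          and e = "\<bar>real_of_int k3\<bar> powr a - \<bar>real_of_int k2\<bar> powr a - m"])
      show "inj_on snd {b'. R b' c}"
        by (auto simp: inj_on_def R_def bc inS_def)
      fix p assume "p \<in> {b'. R b' c}"
      then obtain x y where p: "p = (x, y)" and "inS a C0 m N N1 N2 N3 x y k2 k3"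
        by (cases p) (simp add: R_def bc)
      then show "fst p = snd p + (k3 - k2) \<and> \<bar>real_of_int (snd p)\<bar> \<le> N1 \<and> \<bar>real_of_int (fst p)\<bar> \<le> N \<and>
          \<bar>\<bar>real_of_int (fst p)\<bar> powr a - \<bar>real_of_int (snd p)\<bar> powr a
            - (\<bar>real_of_int k3\<bar> powr a - \<bar>real_of_int k2\<bar> powr a - m)\<bar> \<le> C0"
        unfolding p fst_conv snd_conv inS_def abs_le_iff by (elim conjE) (intro conjI; linarith)
    qed (use a N S \<open>0 < C0\<close> in \<open>auto simp: inS_def\<close>)
    then show "card {b'. R b' c} \<le> K * N1 powr (2 - a)"
      using N by (simp add: min_absorb1)
    show "card {c'. R b c'} \<le> K * (min N2 N3) powr (2 - a)"
      unfolding K_def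
    proof (rule card_difference_level_set_le[where g = fst and h = snd and d = "k - k1"
          and e = "\<bar>real_of_int k\<bar> powr a - \<bar>real_of_int k1\<bar> powr a + m"])
      show "inj_on fst {c'. R b c'}"
        by (auto simp: inj_on_def R_def bc inS_def)
      fix p assume "p \<in> {c'. R b c'}"
      then obtain x y where p: "p = (x, y)" and "inS a C0 m N N1 N2 N3 k k1 x y"
        by (cases p) (simp add: R_def bc)
      then show "snd p = fst p + (k - k1) \<and> \<bar>real_of_int (fst p)\<bar> \<le> N2 \<and> \<bar>real_of_int (snd p)\<bar> \<le> N3 \<and>
          \<bar>\<bar>real_of_int (snd p)\<bar> powr a - \<bar>real_of_int (fst p)\<bar> powr a
            - (\<bar>real_of_int k\<bar> powr a - \<bar>real_of_int k1\<bar> powr a + m)\<bar> \<le> C0"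
        unfolding p fst_conv snd_conv inS_def abs_le_iff by (elim conjE) (intro conjI; linarith)
    qed (use a N S \<open>0 < C0\<close> in \<open>auto simp: inS_def\<close>)
  qed (use a \<open>0 < C0\<close> in \<open>auto simp: K_def finite_int_abs_le\<close>)
  ultimately show ?thesis
    by (simp add: K_def power2_eq_square mult_ac)
qed

lemma opnorm2_Tb_k_k3_to_k1_k2:
  assumes a: "1 < a" "a < 2" and "0 < C0" and N: "1 \<le> N1" "1 \<le> N2" "1 \<le> N3" "N3 \<le> N"
  shows "opnorm2 (\<lambda>(k, k3) (k1, k2). Tb a C0 m N N1 N2 N3 k k1 k2 k3)
    \<le> (4 * C0 / (a * (a - 1)) + 1)\<^sup>2 * (min N1 N2) powr (2 - a) * N3 powr (2 - a)"
proof -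
  define K where "K = 4 * C0 / (a * (a - 1)) + 1"
  define R where "R = (\<lambda>(k, k3) (k1, k2). inS a C0 m N N1 N2 N3 k k1 k2 k3)"
  have "(\<lambda>(k, k3) (k1, k2). Tb a C0 m N N1 N2 N3 k k1 k2 k3) = (\<lambda>b c. if R b c then 1 else 0)"
    by (auto simp: fun_eq_iff R_def Tb_def)
  moreover have "opnorm2 (\<lambda>b c. if R b c then 1 else 0)
      \<le> (K * N3 powr (2 - a)) * (K * (min N1 N2) powr (2 - a))"
  proof (rule opnorm2_indicator_le[where Bs = "{k. \<bar>real_of_int k\<bar> \<le> N} \<times> {k. \<bar>real_of_int k\<bar> \<le> N3}"
        and Cs = "{k. \<bar>real_of_int k\<bar> \<le> N1} \<times> {k. \<bar>real_of_int k\<bar> \<le> N2}"])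
    fix b c assume "R b c"
    then obtain k k1 k2 k3 where bc: "b = (k, k3)" "c = (k1, k2)"
      and S: "inS a C0 m N N1 N2 N3 k k1 k2 k3"
      by (auto simp: R_def split: prod.splits)
    then show "b \<in> {k. \<bar>real_of_int k\<bar> \<le> N} \<times> {k. \<bar>real_of_int k\<bar> \<le> N3} \<and>
        c \<in> {k. \<bar>real_of_int k\<bar> \<le> N1} \<times> {k. \<bar>real_of_int k\<bar> \<le> N2}"
      unfolding inS_def by blast
    have "real (card {b'. R b' c}) \<le> K * (min N3 N) powr (2 - a)"
      unfolding K_def
    proof (rule card_difference_level_set_le[where g = snd and h = fst and d = "k1 - k2"
          and e = "\<bar>real_of_int k1\<bar> powr a - \<bar>real_of_int k2\<bar> powr a - m"])
      show "inj_on snd {b'. R b' c}"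
        by (auto simp: inj_on_def R_def bc inS_def)
      fix p assume "p \<in> {b'. R b' c}"
      then obtain x y where p: "p = (x, y)" and "inS a C0 m N N1 N2 N3 x k1 k2 y"
        by (cases p) (simp add: R_def bc)
      then show "fst p = snd p + (k1 - k2) \<and> \<bar>real_of_int (snd p)\<bar> \<le> N3 \<and> \<bar>real_of_int (fst p)\<bar> \<le> N \<and>
          \<bar>\<bar>real_of_int (fst p)\<bar> powr a - \<bar>real_of_int (snd p)\<bar> powr a
            - (\<bar>real_of_int k1\<bar> powr a - \<bar>real_of_int k2\<bar> powr a - m)\<bar> \<le> C0"
        unfolding p fst_conv snd_conv inS_def abs_le_iff by (elim conjE) (intro conjI; linarith)
    qed (use a N S \<open>0 < C0\<close> in \<open>auto simp: inS_def\<close>)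
    then show "card {b'. R b' c} \<le> K * N3 powr (2 - a)"
      using N by (simp add: min_absorb1)
    have "real (card {c'. R b c'}) \<le> K * (min N2 N1) powr (2 - a)"
      unfolding K_def
    proof (rule card_difference_level_set_le[where g = snd and h = fst and d = "k - k3"
          and e = "\<bar>real_of_int k\<bar> powr a - \<bar>real_of_int k3\<bar> powr a + m"])
      show "inj_on snd {c'. R b c'}"
        by (auto simp: inj_on_def R_def bc inS_def)
      fix p assume "p \<in> {c'. R b c'}"
      then obtain x y where p: "p = (x, y)" and "inS a C0 m N N1 N2 N3 k x y k3"
        by (cases p) (simp add: R_def bc)
      then show "fst p = snd p + (k - k3) \<and> \<bar>real_of_int (snd p)\<bar> \<le> N2 \<and> \<bar>real_of_int (fst p)\<bar> \<le> N1 \<and>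
          \<bar>\<bar>real_of_int (fst p)\<bar> powr a - \<bar>real_of_int (snd p)\<bar> powr a
            - (\<bar>real_of_int k\<bar> powr a - \<bar>real_of_int k3\<bar> powr a + m)\<bar> \<le> C0"
        unfolding p fst_conv snd_conv inS_def abs_le_iff by (elim conjE) (intro conjI; linarith)
    qed (use a N S \<open>0 < C0\<close> in \<open>auto simp: inS_def\<close>)
    then show "card {c'. R b c'} \<le> K * (min N1 N2) powr (2 - a)"
      by (simp add: min.commute)
  qed (use a \<open>0 < C0\<close> in \<open>auto simp: K_def finite_int_abs_le\<close>)
  ultimately show ?thesis
    by (simp add: K_def power2_eq_square mult_ac)
qed

lemma opnorm2_Tb_k_k2_to_k1_k3:
  assumes a: "1 < a" "a < 2" and "0 < C0" and N: "1 \<le> N" "1 \<le> N1" "1 \<le> N2" "1 \<le> N3"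
  shows "opnorm2 (\<lambda>(k, k2) (k1, k3). Tb a C0 m N N1 N2 N3 k k1 k2 k3)
    \<le> (2 * sqrt (4 * C0 / (a * (a - 1))) + 2)\<^sup>2 * (min N1 N3) powr (1 - a / 2) * (min N N2) powr (1 - a / 2)"
proof -
  define K where "K = 2 * sqrt (4 * C0 / (a * (a - 1))) + 2"
  define R where "R = (\<lambda>(k, k2) (k1, k3). inS a C0 m N N1 N2 N3 k k1 k2 k3)"
  have "(\<lambda>(k, k2) (k1, k3). Tb a C0 m N N1 N2 N3 k k1 k2 k3) = (\<lambda>b c. if R b c then 1 else 0)"
    by (auto simp: fun_eq_iff R_def Tb_def)
  moreover have "opnorm2 (\<lambda>b c. if R b c then 1 else 0)
      \<le> (K * (min N N2) powr (1 - a / 2)) * (K * (min N1 N3) powr (1 - a / 2))"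
  proof (rule opnorm2_indicator_le[where Bs = "{k. \<bar>real_of_int k\<bar> \<le> N} \<times> {k. \<bar>real_of_int k\<bar> \<le> N2}"
        and Cs = "{k. \<bar>real_of_int k\<bar> \<le> N1} \<times> {k. \<bar>real_of_int k\<bar> \<le> N3}"])
    fix b c assume "R b c"
    then obtain k k1 k2 k3 where bc: "b = (k, k2)" "c = (k1, k3)"
      and S: "inS a C0 m N N1 N2 N3 k k1 k2 k3"
      by (auto simp: R_def split: prod.splits)
    then show "b \<in> {k. \<bar>real_of_int k\<bar> \<le> N} \<times> {k. \<bar>real_of_int k\<bar> \<le> N2} \<and>
        c \<in> {k. \<bar>real_of_int k\<bar> \<le> N1} \<times> {k. \<bar>real_of_int k\<bar> \<le> N3}"
      unfolding inS_def by blast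
    show "card {b'. R b' c} \<le> K * (min N N2) powr (1 - a / 2)"
      unfolding K_def
    proof (rule card_sum_level_set_le[where g = fst and h = snd and s = "k1 + k3"
          and e = "\<bar>real_of_int k1\<bar> powr a + \<bar>real_of_int k3\<bar> powr a - m"])
      show "inj_on fst {b'. R b' c}"
        by (auto simp: inj_on_def R_def bc inS_def)
      fix p assume "p \<in> {b'. R b' c}"
      then obtain x y where p: "p = (x, y)" and "inS a C0 m N N1 N2 N3 x k1 y k3"
        by (cases p) (simp add: R_def bc)
      then show "snd p = k1 + k3 - fst p \<and> \<bar>real_of_int (fst p)\<bar> \<le> N \<and> \<bar>real_of_int (snd p)\<bar> \<le> N2 \<and>
          \<bar>\<bar>real_of_int (fst p)\<bar> powr a + \<bar>real_of_int (snd p)\<bar> powr a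
            - (\<bar>real_of_int k1\<bar> powr a + \<bar>real_of_int k3\<bar> powr a - m)\<bar> \<le> C0"
        unfolding p fst_conv snd_conv inS_def abs_le_iff by (elim conjE) (intro conjI; linarith)
    qed (use a N \<open>0 < C0\<close> in auto)
    show "card {c'. R b c'} \<le> K * (min N1 N3) powr (1 - a / 2)"
      unfolding K_def
    proof (rule card_sum_level_set_le[where g = fst and h = snd and s = "k + k2"
          and e = "\<bar>real_of_int k\<bar> powr a + \<bar>real_of_int k2\<bar> powr a + m"])
      show "inj_on fst {c'. R b c'}"
        by (auto simp: inj_on_def R_def bc inS_def)
      fix p assume "p \<in> {c'. R b c'}"
      then obtain x y where p: "p = (x, y)" and "inS a C0 m N N1 N2 N3 k x k2 y"
        by (cases p) (simp add: R_def bc)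
      then show "snd p = k + k2 - fst p \<and> \<bar>real_of_int (fst p)\<bar> \<le> N1 \<and> \<bar>real_of_int (snd p)\<bar> \<le> N3 \<and>
          \<bar>\<bar>real_of_int (fst p)\<bar> powr a + \<bar>real_of_int (snd p)\<bar> powr a
            - (\<bar>real_of_int k\<bar> powr a + \<bar>real_of_int k2\<bar> powr a + m)\<bar> \<le> C0"
        unfolding p fst_conv snd_conv inS_def abs_le_iff by (elim conjE) (intro conjI; linarith)
    qed (use a N \<open>0 < C0\<close> in auto)
  qed (use a \<open>0 < C0\<close> in \<open>auto simp: K_def finite_int_abs_le\<close>)
  ultimately show ?thesis
    by (simp add: K_def power2_eq_square mult_ac)
qed

theorem lemma2p13:
  fixes \<alpha> C0 :: real
  assumes "1 < \<alpha>" "\<alpha> < 2" "C0 > 0"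
  shows "\<exists>C. \<forall>N N1 N2 N3 m :: real.
    dyadic N \<and> dyadic N1 \<and> dyadic N2 \<and> dyadic N3 \<and>
    1 \<le> N1 \<and> N1 \<le> N \<and> 1 \<le> N2 \<and> N2 \<le> N \<and> 1 \<le> N3 \<and> N3 \<le> N \<longrightarrow>
      opnorm2 (\<lambda>(k, k1) (k2, k3). Tb \<alpha> C0 m N N1 N2 N3 k k1 k2 k3)
        \<le> C * (min N2 N3) powr (2 - \<alpha>) * N1 powr (2 - \<alpha>) \<and>
      opnorm2 (\<lambda>(k, k3) (k1, k2). Tb \<alpha> C0 m N N1 N2 N3 k k1 k2 k3)
        \<le> C * (min N1 N2) powr (2 - \<alpha>) * N3 powr (2 - \<alpha>) \<and>
      opnorm2 (\<lambda>(k, k2) (k1, k3). Tb \<alpha> C0 m N N1 N2 N3 k k1 k2 k3)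
        \<le> C * (min N1 N3) powr (1 - \<alpha> / 2) * (min N N2) powr (1 - \<alpha> / 2)"
proof -
  define K1 where "K1 = (4 * C0 / (\<alpha> * (\<alpha> - 1)) + 1)\<^sup>2"
  define K2 where "K2 = (2 * sqrt (4 * C0 / (\<alpha> * (\<alpha> - 1))) + 2)\<^sup>2"
  have K: "0 \<le> K1" "0 \<le> K2"
    by (simp_all add: K1_def K2_def)
  show ?thesis
  proof (intro exI[of _ "K1 + K2"] allI impI conjI)
    fix N N1 N2 N3 m :: real
    assume "dyadic N \<and> dyadic N1 \<and> dyadic N2 \<and> dyadic N3 \<and>
      1 \<le> N1 \<and> N1 \<le> N \<and> 1 \<le> N2 \<and> N2 \<le> N \<and> 1 \<le> N3 \<and> N3 \<le> N"
    then have N: "1 \<le> N" "1 \<le> N1" "N1 \<le> N" "1 \<le> N2" "1 \<le> N3" "N3 \<le> N"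
      by auto
    have "opnorm2 (\<lambda>(k, k1) (k2, k3). Tb \<alpha> C0 m N N1 N2 N3 k k1 k2 k3)
        \<le> K1 * (min N2 N3) powr (2 - \<alpha>) * N1 powr (2 - \<alpha>)"
      unfolding K1_def by (rule opnorm2_Tb_k_k1_to_k2_k3) (use assms N in auto)
    also have "\<dots> \<le> (K1 + K2) * (min N2 N3) powr (2 - \<alpha>) * N1 powr (2 - \<alpha>)"
      using K by (intro mult_right_mono) auto
    finally show "opnorm2 (\<lambda>(k, k1) (k2, k3). Tb \<alpha> C0 m N N1 N2 N3 k k1 k2 k3)
        \<le> (K1 + K2) * (min N2 N3) powr (2 - \<alpha>) * N1 powr (2 - \<alpha>)" .
    have "opnorm2 (\<lambda>(k, k3) (k1, k2). Tb \<alpha> C0 m N N1 N2 N3 k k1 k2 k3)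
        \<le> K1 * (min N1 N2) powr (2 - \<alpha>) * N3 powr (2 - \<alpha>)"
      unfolding K1_def by (rule opnorm2_Tb_k_k3_to_k1_k2) (use assms N in auto)
    also have "\<dots> \<le> (K1 + K2) * (min N1 N2) powr (2 - \<alpha>) * N3 powr (2 - \<alpha>)"
      using K by (intro mult_right_mono) auto
    finally show "opnorm2 (\<lambda>(k, k3) (k1, k2). Tb \<alpha> C0 m N N1 N2 N3 k k1 k2 k3)
        \<le> (K1 + K2) * (min N1 N2) powr (2 - \<alpha>) * N3 powr (2 - \<alpha>)" .
    have "opnorm2 (\<lambda>(k, k2) (k1, k3). Tb \<alpha> C0 m N N1 N2 N3 k k1 k2 k3)
        \<le> K2 * (min N1 N3) powr (1 - \<alpha> / 2) * (min N N2) powr (1 - \<alpha> / 2)"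
      unfolding K2_def by (rule opnorm2_Tb_k_k2_to_k1_k3) (use assms N in auto)
    also have "\<dots> \<le> (K1 + K2) * (min N1 N3) powr (1 - \<alpha> / 2) * (min N N2) powr (1 - \<alpha> / 2)"
      using K by (intro mult_right_mono) auto
    finally show "opnorm2 (\<lambda>(k, k2) (k1, k3). Tb \<alpha> C0 m N N1 N2 N3 k k1 k2 k3)
        \<le> (K1 + K2) * (min N1 N3) powr (1 - \<alpha> / 2) * (min N N2) powr (1 - \<alpha> / 2)" .
  qed
qed

end
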